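(* Let $((X_t,\sigma_t))$ be the strictly stationary AGARCH$(p,q)$ process with true parameter $\theta_0=(\alpha_0^\circ,\dots,\alpha_p^\circ,\beta_1^\circ,\dots,\beta_q^\circ,\gamma^\circ)^T$ in the interior of a compact set $K\subset(0,\infty)\times[0,\infty)^p\times B\times[-1,1]$ that equals the closure of its interior, where $B=\{(\beta_1,\dots,\beta_q)^T\in[0,1)^q:\sum_j\beta_j<1\}$; assume $\alpha_i^\circ>0$ for some $i\ge1$, $(\alpha_p^\circ,\beta_q^\circ)\ne(0,0)$, the polynomials $\sum_{i=1}^p\alpha_i^\circ z^i$ and $1-\sum_{j=1}^q\beta_j^\circ z^j$ have no common zeros, the distribution of $Z_0$ is not concentrated at two points, $\mathbb EZ_0^4<\infty$, and $\mathbb P(|Z_0|\le z)=o(z^\mu)$ as $z\downarrow0$ for some $\mu>0$. Then the components of the random vector $$\Big(1,(|X_0|-\gamma^\circ X_0)^2,\dots,(|X_{-p+1}|-\gamma^\circ X_{-p+1})^2,\sigma_0^2,\dots,\sigma_{-q+1}^2,\ -2\sum_{i=1}^p\alpha_i^\circ X_{1-i}(|X_{1-i}|-\gamma^\circ X_{1-i})\Big)$$ are linearly independent random variables, i.e. if $\xi\in\mathbb R^{p+q+2}$ and the inner product of $\xi$ with this vector is $0$ a.s., then $\xi=0$.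
   Context: $(Z_t)$ i.i.d. with $\mathbb EZ_0=0$, $\mathbb EZ_0^2=1$, $\mathcal F_t=\sigma(Z_k:k\le t)$. AGARCH$(p,q)$: $X_t=\sigma_tZ_t$, $\sigma_t^2=\alpha_0^\circ+\sum_{i=1}^p\alpha_i^\circ(|X_{t-i}|-\gamma^\circ X_{t-i})^2+\sum_{j=1}^q\beta_j^\circ\sigma_{t-j}^2$, $t\in\mathbb Z$, with $\sigma_t\ge0$ $\mathcal F_{t-1}$-measurable. The vector in the claim is the gradient with respect to $\theta=(\alpha_0,\dots,\alpha_p,\beta_1,\dots,\beta_q,\gamma)$ of $\alpha_0+\sum_i\alpha_i(|X_{1-i}|-\gamma X_{1-i})^2+\sum_j\beta_j\sigma_{1-j}^2$ at $\theta_0$. *)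

theory Defs
  imports "HOL-Probability.Probability" "HOL-Library.Landau_Symbols"
begin

text \<open>Parameter vector theta = (alpha_0,...,alpha_p,beta_1,...,beta_q,gamma) in R^(p+q+2),
  represented as a function nat => real that vanishes at indices >= p+q+2.\<close>
definition param_vec :: "nat \<Rightarrow> nat \<Rightarrow> (nat \<Rightarrow> real) \<Rightarrow> (nat \<Rightarrow> real) \<Rightarrow> real \<Rightarrow> nat \<Rightarrow> real" where
  "param_vec p q \<alpha> \<beta> \<gamma> = (\<lambda>i. if i \<le> p then \<alpha> i else if i \<le> p + q then \<beta> (i - p)
      else if i = p + q + 1 then \<gamma> else 0)"

text \<open>The coordinate space R^d, embedded in nat => real (product topology).\<close>
definition coord_space :: "nat \<Rightarrow> (nat \<Rightarrow> real) set" where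
  "coord_space d = {\<theta>. \<forall>i\<ge>d. \<theta> i = 0}"

definition AGARCH_param_set :: "nat \<Rightarrow> nat \<Rightarrow> (nat \<Rightarrow> real) set" where
  "AGARCH_param_set p q = {\<theta> \<in> coord_space (p + q + 2).
      \<theta> 0 > 0 \<and> (\<forall>i\<in>{1..p}. \<theta> i \<ge> 0)
      \<and> (\<forall>j\<in>{1..q}. 0 \<le> \<theta> (p + j) \<and> \<theta> (p + j) < 1) \<and> (\<Sum>j=1..q. \<theta> (p + j)) < 1
      \<and> -1 \<le> \<theta> (p + q + 1) \<and> \<theta> (p + q + 1) \<le> 1}"

definition past_sigma :: "'a measure \<Rightarrow> (int \<Rightarrow> 'a \<Rightarrow> real) \<Rightarrow> int \<Rightarrow> 'a measure" where
  "past_sigma M Z t = sigma (space M) (\<Union>k\<in>{..t}. {Z k -` A \<inter> space M | A. A \<in> sets borel})"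

definition strictly_stationary :: "'a measure \<Rightarrow> (int \<Rightarrow> 'a \<Rightarrow> 'b::topological_space) \<Rightarrow> bool" where
  "strictly_stationary M Y \<longleftrightarrow> (\<forall>J h. finite J \<longrightarrow>
      distr M (Pi\<^sub>M J (\<lambda>_. borel)) (\<lambda>\<omega>. \<lambda>t\<in>J. Y (t + h) \<omega>)
    = distr M (Pi\<^sub>M J (\<lambda>_. borel)) (\<lambda>\<omega>. \<lambda>t\<in>J. Y t \<omega>))"

end

theory Submission
  imports Defs "HOL-Computational_Algebra.Fundamental_Theorem_Algebra"
    "HOL-Computational_Algebra.Polynomial_Factorial" "HOL-Computational_Algebra.Field_as_Ring"
begin

(* The innovation Z_t is independent of the past F_(t-1), and both (|X_t| - gamma X_t)^2 and
   X_t (|X_t| - gamma X_t) equal sigma_t^2 times a function z |-> (if z >= 0 then a else b) * z^2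
   of Z_t, where sigma_t^2 > 0 is F_(t-1)-measurable. If such a term plus an F_(t-1)-measurable
   remainder vanishes a.s., that function of Z_t coincides with a variable independent of it, so it
   is a.s. constant; as Z_0 is centred and not concentrated on two points, a = b = 0. At time 0 this
   kills the gamma-component of xi.
   A remaining relation c + sum_i x_i (|X_(s-i)| - gamma X_(s-i))^2 + sum_j y_j sigma_(s-j)^2 = 0
   then has x_1 = 0, and substituting the volatility recursion for sigma_(s-1)^2 gives a relation
   of the same kind at time s - 1 whose coefficient polynomials satisfy
   x (1 - B) + y A = z (x' (1 - B) + y' A), with A = sum_i alpha_i z^i and B = sum_j beta_j z^j.
   Hence x (1 - B) + y A is divisible by every power of z, so it vanishes, and coprimality of A and
   1 - B together with the degree bounds forces x = y = 0. *)

lemma past_sigma_generator_subset: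
  "(\<Union>k\<in>{..t}. {Z k -` A \<inter> space M | A. A \<in> sets borel}) \<subseteq> Pow (space M)"
  by auto

lemma sets_past_sigma:
  "sets (past_sigma M Z t)
    = sigma_sets (space M) (\<Union>k\<in>{..t}. {Z k -` A \<inter> space M | A. A \<in> sets borel})"
  unfolding past_sigma_def by (rule sets_measure_of[OF past_sigma_generator_subset])

lemma space_past_sigma [simp]: "space (past_sigma M Z t) = space M"
  unfolding past_sigma_def by (rule space_measure_of[OF past_sigma_generator_subset])

lemma subalgebra_past_sigma:
  assumes "\<And>t. Z t \<in> borel_measurable M"
  shows "subalgebra M (past_sigma M Z t)"
  unfolding subalgebra_def sets_past_sigma
  by (auto intro!: sets.sigma_sets_subset measurable_sets assms)

lemma measurable_past_sigma_mono:
  assumes "s \<le> t" "f \<in> borel_measurable (past_sigma M Z s)"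
  shows "f \<in> borel_measurable (past_sigma M Z t)"
proof -
  have "sets (past_sigma M Z s) \<subseteq> sets (past_sigma M Z t)"
    unfolding sets_past_sigma using \<open>s \<le> t\<close>
    by (intro sigma_sets_subseteq) (fastforce intro: order_trans)
  then show ?thesis
    using measurable_mono[of borel borel "past_sigma M Z s" "past_sigma M Z t"] assms(2) by auto
qed

lemma measurable_past_sigma_Z:
  assumes "k \<le> t"
  shows "Z k \<in> borel_measurable (past_sigma M Z t)"
proof (rule measurableI)
  fix A :: "real set" assume "A \<in> sets borel"
  then show "Z k -` A \<inter> space (past_sigma M Z t) \<in> sets (past_sigma M Z t)"
    unfolding sets_past_sigma using assms by (auto intro: sigma_sets.Basic)
qed auto

definition piecewise_sq :: "real \<Rightarrow> real \<Rightarrow> real \<Rightarrow> real" where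
  "piecewise_sq a b z = (if z \<ge> 0 then a else b) * z\<^sup>2"

lemma borel_measurable_piecewise_sq [measurable]: "piecewise_sq a b \<in> borel_measurable borel"
  unfolding piecewise_sq_def by measurable

lemma piecewise_sq_smult: "k * piecewise_sq a b z = piecewise_sq (k * a) (k * b) z"
  by (simp add: piecewise_sq_def)

lemma piecewise_sq_add: "piecewise_sq a b z + piecewise_sq a' b' z = piecewise_sq (a + a') (b + b') z"
  by (simp add: piecewise_sq_def algebra_simps)

context prob_space
begin

lemma prob_eq_if_distr_eq:
  assumes "distr M N X = distr M N Y" "X \<in> measurable M N" "Y \<in> measurable M N" "A \<in> sets N"
  shows "prob (X -` A \<inter> space M) = prob (Y -` A \<inter> space M)"
  using assms by (metis measure_distr)

lemma AE_eq_expectation_if_zero_one: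
  fixes V :: "'a \<Rightarrow> real"
  assumes V [measurable]: "integrable M V"
    and zero_one: "\<And>A. A \<in> sets borel \<Longrightarrow> prob {\<omega> \<in> space M. V \<omega> \<in> A} \<in> {0, 1}"
  shows "AE \<omega> in M. V \<omega> = expectation V"
proof -
  let ?c = "expectation V"
  have "prob {\<omega> \<in> space M. V \<omega> < ?c} \<in> {0, 1}" "prob {\<omega> \<in> space M. V \<omega> > ?c} \<in> {0, 1}"
    using zero_one[of "{..<?c}"] zero_one[of "{?c<..}"] by simp_all
  moreover have "\<not> (AE \<omega> in M. V \<omega> < ?c)" "\<not> (AE \<omega> in M. V \<omega> > ?c)"
    using expectation_less[OF V] expectation_greater[OF V] by blast+
  ultimately have "AE \<omega> in M. \<not> V \<omega> < ?c" "AE \<omega> in M. \<not> V \<omega> > ?c"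
    by (auto simp: prob_Collect_eq_0 prob_Collect_eq_1)
  then show ?thesis by eventually_elim simp
qed

lemma not_AE_nonpos_if_mean_zero:
  fixes V :: "'a \<Rightarrow> real"
  assumes "integrable M V" "expectation V = 0" "\<not> (AE \<omega> in M. V \<omega> = 0)"
  shows "\<not> (AE \<omega> in M. V \<omega> \<le> 0)"
proof
  assume "AE \<omega> in M. V \<omega> \<le> 0"
  then have "expectation (\<lambda>\<omega>. - V \<omega>) = 0 \<longleftrightarrow> (AE \<omega> in M. - V \<omega> = 0)"
    using assms(1) by (intro integral_nonneg_eq_0_iff_AE) auto
  then show False using assms(2,3) by simp
qed

end

locale iid_innovations = prob_space +
  fixes Z :: "int \<Rightarrow> 'a \<Rightarrow> real"
  assumes Z_measurable [measurable]: "\<And>t. Z t \<in> borel_measurable M"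
    and Z_indep: "indep_vars (\<lambda>_. borel) Z UNIV"
    and Z_distr: "\<And>t. distr M borel (Z t) = distr M borel (Z 0)"
    and Z_integrable: "integrable M (Z 0)"
    and Z_mean_zero: "expectation (Z 0) = 0"
    and Z_sq_integrable: "integrable M (\<lambda>\<omega>. (Z 0 \<omega>)\<^sup>2)"
    and Z_not_two_points: "\<not> (\<exists>a b. prob {\<omega> \<in> space M. Z 0 \<omega> = a \<or> Z 0 \<omega> = b} = 1)"
begin

lemma subalgebra_past: "subalgebra M (past_sigma M Z t)"
  using subalgebra_past_sigma[of Z M, OF Z_measurable] .

lemma indep_Z_past_sigma:
  assumes B: "B \<in> sets borel" and E: "E \<in> sets (past_sigma M Z (t - 1))"
  shows "prob (Z t -` B \<inter> space M \<inter> E) = prob (Z t -` B \<inter> space M) * prob E"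
proof -
  define F where "F = (\<lambda>i. {Z i -` A \<inter> space M | A. A \<in> sets borel})"
  define I where "I = (\<lambda>b::bool. if b then {t} else {..<t})"
  have "indep_sets F UNIV" using Z_indep unfolding indep_vars_def2 F_def by auto
  then have "indep_sets F (\<Union>j. I j)" by (rule indep_sets_mono_index[rotated]) auto
  moreover have "Int_stable (F i)" for i
    unfolding F_def Int_stable_def by (auto 4 4 intro: exI[of _ "_ \<inter> _"])
  moreover have "disjoint_family I"
    unfolding disjoint_family_on_def I_def by auto
  ultimately have indep: "indep_sets (\<lambda>j. sigma_sets (space M) (\<Union>i\<in>I j. F i)) UNIV"
    by (intro indep_sets_collect_sigma)
  have "Z t -` B \<inter> space M \<in> sigma_sets (space M) (\<Union>i\<in>I True. F i)"
    using B unfolding I_def F_def by (auto intro!: sigma_sets.Basic)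
  moreover have "{..t - 1} = {..<t}" by auto
  then have "E \<in> sigma_sets (space M) (\<Union>i\<in>I False. F i)"
    using E unfolding sets_past_sigma I_def F_def by simp
  ultimately show ?thesis
    using indep_setsD[OF indep, of UNIV "\<lambda>b. if b then Z t -` B \<inter> space M else E"]
    by (simp add: UNIV_bool Int_commute)
qed

lemma prob_zero_one_if_AE_eq_past:
  assumes f [measurable]: "f \<in> borel_measurable borel"
    and W: "W \<in> borel_measurable (past_sigma M Z (t - 1))"
    and eq: "AE \<omega> in M. f (Z t \<omega>) = W \<omega>"
    and A [measurable]: "A \<in> sets borel"
  shows "prob {\<omega> \<in> space M. f (Z t \<omega>) \<in> A} \<in> {0, 1}"
proof -
  have [measurable]: "f -` A \<in> sets borel" using measurable_sets_borel[OF f A] .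
  define E where "E = Z t -` (f -` A) \<inter> space M"
  define E' where "E' = W -` A \<inter> space M"
  have E'_past: "E' \<in> sets (past_sigma M Z (t - 1))"
    using measurable_sets[OF W A] unfolding E'_def by simp
  then have [measurable]: "E' \<in> events"
    using subalgebra_past by (auto simp: subalgebra_def)
  have [measurable]: "E \<in> events" unfolding E_def by measurable
  have "prob (E \<inter> E') = prob E * prob E'"
    unfolding E_def by (rule indep_Z_past_sigma[OF _ E'_past]) measurable
  moreover have "AE \<omega> in M. \<omega> \<in> E \<inter> E' \<longleftrightarrow> \<omega> \<in> E" "AE \<omega> in M. \<omega> \<in> E' \<longleftrightarrow> \<omega> \<in> E"
    using eq by (auto simp: E_def E'_def elim!: AE_mp)
  then have "prob (E \<inter> E') = prob E" "prob E' = prob E"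
    by (auto intro!: measure_eq_AE)
  ultimately have "prob E = prob E * prob E" by simp
  then have "prob E \<in> {0, 1}" by auto
  moreover have "E = {\<omega> \<in> space M. f (Z t \<omega>) \<in> A}" unfolding E_def by auto
  ultimately show ?thesis by simp
qed

lemma AE_const_if_AE_eq_past:
  fixes f :: "real \<Rightarrow> real"
  assumes f [measurable]: "f \<in> borel_measurable borel"
    and W: "W \<in> borel_measurable (past_sigma M Z (t - 1))"
    and eq: "AE \<omega> in M. f (Z t \<omega>) = W \<omega>"
    and int: "integrable M (\<lambda>\<omega>. f (Z 0 \<omega>))"
  shows "AE \<omega> in M. f (Z 0 \<omega>) = expectation (\<lambda>\<omega>. f (Z 0 \<omega>))"
proof (rule AE_eq_expectation_if_zero_one[OF int])
  fix A :: "real set" assume A [measurable]: "A \<in> sets borel"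
  have [measurable]: "f -` A \<in> sets borel" using measurable_sets_borel[OF f A] .
  have "prob (Z t -` (f -` A) \<inter> space M) = prob (Z 0 -` (f -` A) \<inter> space M)"
    by (rule prob_eq_if_distr_eq[OF Z_distr]) measurable
  moreover have "Z s -` (f -` A) \<inter> space M = {\<omega> \<in> space M. f (Z s \<omega>) \<in> A}" for s
    by auto
  ultimately show "prob {\<omega> \<in> space M. f (Z 0 \<omega>) \<in> A} \<in> {0, 1}"
    using prob_zero_one_if_AE_eq_past[OF f W eq A] by simp
qed

lemma Z_not_AE_two_points: "\<not> (AE \<omega> in M. Z 0 \<omega> = a \<or> Z 0 \<omega> = b)"
proof -
  have "{\<omega> \<in> space M. Z 0 \<omega> = a \<or> Z 0 \<omega> = b} \<in> events" by measurable
  from prob_Collect_eq_1[OF this] show ?thesis using Z_not_two_points by blast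
qed

lemma Z_not_AE_nonpos: "\<not> (AE \<omega> in M. Z 0 \<omega> \<le> 0)"
  and Z_not_AE_nonneg: "\<not> (AE \<omega> in M. Z 0 \<omega> \<ge> 0)"
proof -
  have "\<not> (AE \<omega> in M. Z 0 \<omega> = 0)"
    using Z_not_AE_two_points[of 0 0] by simp
  then show "\<not> (AE \<omega> in M. Z 0 \<omega> \<le> 0)" "\<not> (AE \<omega> in M. Z 0 \<omega> \<ge> 0)"
    using not_AE_nonpos_if_mean_zero[OF Z_integrable Z_mean_zero]
      not_AE_nonpos_if_mean_zero[of "\<lambda>\<omega>. - Z 0 \<omega>"] Z_integrable Z_mean_zero
    by auto
qed

lemma piecewise_sq_AE_const_imp_zero:
  assumes const: "AE \<omega> in M. piecewise_sq a b (Z 0 \<omega>) = c"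
  shows "a = 0 \<and> b = 0"
proof (cases "c = 0")
  case False
  from const have "AE \<omega> in M. Z 0 \<omega> = sqrt (c / a) \<or> Z 0 \<omega> = - sqrt (c / b)"
  proof eventually_elim
    case (elim \<omega>)
    show ?case
    proof (cases "Z 0 \<omega> \<ge> 0")
      case True
      with elim False have "(Z 0 \<omega>)\<^sup>2 = c / a" by (auto simp: piecewise_sq_def field_simps)
      with True show ?thesis by (metis real_sqrt_abs abs_of_nonneg)
    next
      case negative: False
      with elim False have "(Z 0 \<omega>)\<^sup>2 = c / b" by (auto simp: piecewise_sq_def field_simps)
      with negative show ?thesis by (metis real_sqrt_abs abs_of_neg minus_minus not_le)
    qed
  qed
  then show ?thesis using Z_not_AE_two_points by blast
next
  case True
  have "AE \<omega> in M. Z 0 \<omega> \<le> 0" if "a \<noteq> 0"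
    using const by eventually_elim (use True that in \<open>auto simp: piecewise_sq_def split: if_splits\<close>)
  moreover have "AE \<omega> in M. Z 0 \<omega> \<ge> 0" if "b \<noteq> 0"
    using const by eventually_elim (use True that in \<open>auto simp: piecewise_sq_def split: if_splits\<close>)
  ultimately show ?thesis using Z_not_AE_nonpos Z_not_AE_nonneg by blast
qed

lemma piecewise_sq_coeffs_zero_if_past:
  assumes S: "S \<in> borel_measurable (past_sigma M Z (t - 1))"
    and R: "R \<in> borel_measurable (past_sigma M Z (t - 1))"
    and S_pos: "\<And>\<omega>. \<omega> \<in> space M \<Longrightarrow> S \<omega> > 0"
    and eq: "AE \<omega> in M. S \<omega> * piecewise_sq a b (Z t \<omega>) + R \<omega> = 0"
  shows "a = 0 \<and> b = 0"
proof -
  have "(\<lambda>\<omega>. - R \<omega> / S \<omega>) \<in> borel_measurable (past_sigma M Z (t - 1))"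
    using S R by measurable
  moreover have "AE \<omega> in M. piecewise_sq a b (Z t \<omega>) = - R \<omega> / S \<omega>"
    using eq AE_space
  proof eventually_elim
    case (elim \<omega>)
    moreover have "S \<omega> > 0" using S_pos elim by simp
    ultimately show ?case by (simp add: field_simps)
  qed
  moreover have "integrable M (\<lambda>\<omega>. piecewise_sq a b (Z 0 \<omega>))"
  proof (rule Bochner_Integration.integrable_bound)
    show "integrable M (\<lambda>\<omega>. (\<bar>a\<bar> + \<bar>b\<bar>) * (Z 0 \<omega>)\<^sup>2)" using Z_sq_integrable by simp
    show "AE \<omega> in M. norm (piecewise_sq a b (Z 0 \<omega>)) \<le> norm ((\<bar>a\<bar> + \<bar>b\<bar>) * (Z 0 \<omega>)\<^sup>2)"
      by (auto simp: piecewise_sq_def abs_mult intro!: mult_right_mono)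
  qed measurable
  ultimately have "AE \<omega> in M. piecewise_sq a b (Z 0 \<omega>) = expectation (\<lambda>\<omega>. piecewise_sq a b (Z 0 \<omega>))"
    by (rule AE_const_if_AE_eq_past[OF borel_measurable_piecewise_sq])
  then show ?thesis by (rule piecewise_sq_AE_const_imp_zero)
qed

end

definition lag_poly :: "(nat \<Rightarrow> 'a::comm_monoid_add) \<Rightarrow> nat \<Rightarrow> 'a poly" where
  "lag_poly a n = (\<Sum>i=1..n. monom (a i) i)"

lemma coeff_lag_poly: "coeff (lag_poly a n) k = (if 1 \<le> k \<and> k \<le> n then a k else 0)"
  unfolding lag_poly_def coeff_sum coeff_monom by (auto simp: sum.delta)

lemma degree_lag_poly_le: "degree (lag_poly a n) \<le> n"
  by (rule degree_le) (simp add: coeff_lag_poly)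

lemma poly_map_of_real_lag_poly:
  "poly (map_poly complex_of_real (lag_poly a n)) z = (\<Sum>i=1..n. complex_of_real (a i) * z ^ i)"
proof -
  have "map_poly complex_of_real (lag_poly a n) = (\<Sum>i=1..n. monom (complex_of_real (a i)) i)"
    by (simp add: poly_eq_iff coeff_map_poly coeff_lag_poly coeff_sum coeff_monom sum.delta)
  then show ?thesis by (simp add: poly_sum poly_monom)
qed

lemma map_poly_of_real_mult:
  "map_poly complex_of_real (p * q) = map_poly complex_of_real p * map_poly complex_of_real q"
  by (simp add: poly_eq_iff coeff_map_poly coeff_mult)

lemma coprime_if_no_common_complex_root:
  fixes f g :: "real poly"
  assumes "g \<noteq> 0"
    and no_common_root: "\<And>z. poly (map_poly complex_of_real f) z = 0
                           \<Longrightarrow> poly (map_poly complex_of_real g) z \<noteq> 0"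
  shows "coprime f g"
proof (rule coprimeI)
  fix c assume "c dvd f" "c dvd g"
  then obtain f' g' where f: "f = c * f'" and g: "g = c * g'" by (auto elim!: dvdE)
  show "is_unit c"
  proof (rule ccontr)
    assume "\<not> is_unit c"
    moreover have "c \<noteq> 0" using \<open>g \<noteq> 0\<close> g by auto
    ultimately have "degree (map_poly complex_of_real c) \<noteq> 0"
      by (simp add: is_unit_iff_degree degree_map_poly)
    then obtain z where "poly (map_poly complex_of_real c) z = 0"
      using fundamental_theorem_of_algebra_alt by (metis degree_pCons_0)
    then show False
      using no_common_root[of z] by (simp add: f g map_poly_of_real_mult)
  qed
qed

lemma coprime_linear_relation_imp_zero:
  fixes A C x y :: "'a::field_gcd poly"
  assumes "coprime A C" and rel: "x * C + y * A = 0"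
    and "coeff C 0 \<noteq> 0" and "coeff y 0 = 0"
    and deg: "degree y \<le> degree C \<or> (A \<noteq> 0 \<and> degree x \<le> degree A)"
  shows "x = 0 \<and> y = 0"
proof -
  have "C \<noteq> 0" using \<open>coeff C 0 \<noteq> 0\<close> by auto
  have "C dvd y * A" using rel by (metis add_eq_0_iff dvd_minus_iff dvd_triv_right)
  then have "C dvd y" using \<open>coprime A C\<close> by (simp add: coprime_dvd_mult_left_iff coprime_commute)
  then obtain k where y: "y = C * k" by (elim dvdE)
  have "C * (x + k * A) = 0" using rel by (simp add: y algebra_simps)
  then have x: "x = - (k * A)" using \<open>C \<noteq> 0\<close> by (simp add: eq_neg_iff_add_eq_0)
  have "k = 0"
  proof (rule ccontr)
    assume "k \<noteq> 0"
    have "coeff k 0 = 0" using assms(3,4) y by (simp add: coeff_mult_0)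
    then have "degree k \<noteq> 0" using \<open>k \<noteq> 0\<close> by (metis degree_0_id pCons_0_0)
    then have "degree y > degree C" "A \<noteq> 0 \<Longrightarrow> degree x > degree A"
      using y x \<open>C \<noteq> 0\<close> \<open>k \<noteq> 0\<close> by (auto simp: degree_mult_eq)
    then show False using deg by auto
  qed
  then show ?thesis using x y by simp
qed

lemma shift_linear_relation:
  fixes A C x y :: "'a::comm_ring_1 poly"
  assumes "coeff x 0 = 0" "coeff y 0 = 0"
  shows "x * C + y * A
    = [:0, 1:] * ((poly_shift 1 x + smult (coeff y 1) A) * C + (poly_shift 1 y - smult (coeff y 1) C) * A)"
proof -
  have "[:0, 1:] * poly_shift 1 p = p" if "coeff p 0 = 0" for p :: "'a poly"
    using that by (simp add: poly_eq_iff coeff_pCons coeff_poly_shift split: nat.split)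
  then show ?thesis using assms by (simp add: algebra_simps)
qed

lemma sum_shift_index:
  fixes f :: "nat \<Rightarrow> 'a::comm_monoid_add"
  shows "(\<Sum>i=1..n. f (Suc i)) + f 1 = (\<Sum>i=1..n. f i) + f (Suc n)"
proof (induction n)
  case (Suc n)
  have "(\<Sum>i=1..Suc n. f (Suc i)) + f 1 = ((\<Sum>i=1..n. f (Suc i)) + f 1) + f (Suc (Suc n))"
    by (simp add: ac_simps)
  also have "\<dots> = (\<Sum>i=1..Suc n. f i) + f (Suc (Suc n))"
    using Suc.IH by simp
  finally show ?case .
qed simp

locale agarch = iid_innovations +
  fixes X \<sigma> :: "int \<Rightarrow> 'a \<Rightarrow> real" and p q :: nat and \<alpha> \<beta> :: "nat \<Rightarrow> real" and \<gamma> :: real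
  assumes p_pos: "p \<ge> 1"
    and \<sigma>_nonneg: "\<And>t \<omega>. \<omega> \<in> space M \<Longrightarrow> \<sigma> t \<omega> \<ge> 0"
    and \<sigma>_adapted: "\<And>t. \<sigma> t \<in> borel_measurable (past_sigma M Z (t - 1))"
    and X_eq: "\<And>t \<omega>. \<omega> \<in> space M \<Longrightarrow> X t \<omega> = \<sigma> t \<omega> * Z t \<omega>"
    and recursion: "\<And>t \<omega>. \<omega> \<in> space M \<Longrightarrow>
        (\<sigma> t \<omega>)\<^sup>2 = \<alpha> 0 + (\<Sum>i=1..p. \<alpha> i * (\<bar>X (t - int i) \<omega>\<bar> - \<gamma> * X (t - int i) \<omega>)\<^sup>2)
                     + (\<Sum>j=1..q. \<beta> j * (\<sigma> (t - int j) \<omega>)\<^sup>2)"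
    and \<alpha>0_pos: "\<alpha> 0 > 0"
    and \<alpha>_nonneg: "\<And>i. i \<in> {1..p} \<Longrightarrow> \<alpha> i \<ge> 0"
    and \<beta>_nonneg: "\<And>j. j \<in> {1..q} \<Longrightarrow> \<beta> j \<ge> 0"
    and \<gamma>_bounds: "-1 < \<gamma>" "\<gamma> < 1"
begin

definition asym_abs :: "int \<Rightarrow> 'a \<Rightarrow> real" where
  "asym_abs t \<omega> = \<bar>X t \<omega>\<bar> - \<gamma> * X t \<omega>"

lemma sigma_sq_pos: "\<omega> \<in> space M \<Longrightarrow> (\<sigma> t \<omega>)\<^sup>2 > 0"
proof -
  assume \<omega>: "\<omega> \<in> space M"
  have "0 \<le> (\<Sum>i=1..p. \<alpha> i * (\<bar>X (t - int i) \<omega>\<bar> - \<gamma> * X (t - int i) \<omega>)\<^sup>2)"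
    by (intro sum_nonneg mult_nonneg_nonneg \<alpha>_nonneg) auto
  moreover have "0 \<le> (\<Sum>j=1..q. \<beta> j * (\<sigma> (t - int j) \<omega>)\<^sup>2)"
    by (intro sum_nonneg mult_nonneg_nonneg \<beta>_nonneg) auto
  ultimately show ?thesis using recursion[OF \<omega>, of t] \<alpha>0_pos by linarith
qed

lemma asym_abs_sq:
  "\<omega> \<in> space M \<Longrightarrow> (asym_abs t \<omega>)\<^sup>2 = (\<sigma> t \<omega>)\<^sup>2 * piecewise_sq ((1 - \<gamma>)\<^sup>2) ((1 + \<gamma>)\<^sup>2) (Z t \<omega>)"
  using \<sigma>_nonneg[of \<omega> t]
  by (auto simp: asym_abs_def X_eq piecewise_sq_def abs_mult power2_eq_square algebra_simps)

lemma X_mult_asym_abs: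
  "\<omega> \<in> space M \<Longrightarrow> X t \<omega> * asym_abs t \<omega> = (\<sigma> t \<omega>)\<^sup>2 * piecewise_sq (1 - \<gamma>) (- (1 + \<gamma>)) (Z t \<omega>)"
  using \<sigma>_nonneg[of \<omega> t]
  by (auto simp: asym_abs_def X_eq piecewise_sq_def abs_mult power2_eq_square algebra_simps)

lemma measurable_sigma_past: "k \<le> m + 1 \<Longrightarrow> \<sigma> k \<in> borel_measurable (past_sigma M Z m)"
  by (rule measurable_past_sigma_mono[OF _ \<sigma>_adapted]) simp

lemma measurable_X_past:
  assumes "k \<le> m"
  shows "X k \<in> borel_measurable (past_sigma M Z m)"
proof -
  have "(\<lambda>\<omega>. \<sigma> k \<omega> * Z k \<omega>) \<in> borel_measurable (past_sigma M Z m)"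
    using measurable_sigma_past[of k m] measurable_past_sigma_Z[OF assms] assms
    by (intro borel_measurable_times) auto
  then show ?thesis by (rule measurable_cong[THEN iffD1, rotated]) (simp add: X_eq)
qed

lemma measurable_asym_abs_past: "k \<le> m \<Longrightarrow> asym_abs k \<in> borel_measurable (past_sigma M Z m)"
  unfolding asym_abs_def using measurable_X_past[of k m] by measurable

lemma piecewise_sq_coeffs_zero:
  assumes "R \<in> borel_measurable (past_sigma M Z (t - 1))"
    and "AE \<omega> in M. (\<sigma> t \<omega>)\<^sup>2 * piecewise_sq a b (Z t \<omega>) + R \<omega> = 0"
  shows "a = 0 \<and> b = 0"
proof (rule piecewise_sq_coeffs_zero_if_past[OF _ assms(1) sigma_sq_pos assms(2)])
  show "(\<lambda>\<omega>. (\<sigma> t \<omega>)\<^sup>2) \<in> borel_measurable (past_sigma M Z (t - 1))"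
    using \<sigma>_adapted[of t] by measurable
qed


definition arch_poly :: "real poly" where
  "arch_poly = lag_poly \<alpha> p"

definition garch_poly :: "real poly" where
  "garch_poly = 1 - lag_poly \<beta> q"

definition relation_poly :: "real poly \<Rightarrow> real poly \<Rightarrow> real poly" where
  "relation_poly x y = x * garch_poly + y * arch_poly"

(* The coefficients are kept as polynomials so that substituting the recursion for sigma_(s-1)^2
   becomes the polynomial identity shift_linear_relation. *)
definition linear_relation :: "int \<Rightarrow> real \<Rightarrow> real poly \<Rightarrow> real poly \<Rightarrow> bool" where
  "linear_relation s c x y \<longleftrightarrow> (AE \<omega> in M. c + (\<Sum>i=1..p. coeff x i * (asym_abs (s - int i) \<omega>)\<^sup>2)
      + (\<Sum>j=1..q. coeff y j * (\<sigma> (s - int j) \<omega>)\<^sup>2) = 0)"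

definition admissible :: "real poly \<Rightarrow> real poly \<Rightarrow> bool" where
  "admissible x y \<longleftrightarrow> coeff x 0 = 0 \<and> degree x \<le> p \<and> coeff y 0 = 0 \<and> degree y \<le> q"

lemma linear_relation_coeff_1:
  assumes "linear_relation s c x y"
  shows "coeff x 1 = 0"
proof -
  define R where "R \<omega> = c + (\<Sum>i=2..p. coeff x i * (asym_abs (s - int i) \<omega>)\<^sup>2)
      + (\<Sum>j=1..q. coeff y j * (\<sigma> (s - int j) \<omega>)\<^sup>2)" for \<omega>
  have "R \<in> borel_measurable (past_sigma M Z (s - 1 - 1))"
    unfolding R_def
    by (intro borel_measurable_add borel_measurable_sum borel_measurable_times
        borel_measurable_power borel_measurable_const measurable_asym_abs_past measurable_sigma_past) auto
  moreover have "AE \<omega> in M. (\<sigma> (s - 1) \<omega>)\<^sup>2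
      * piecewise_sq (coeff x 1 * (1 - \<gamma>)\<^sup>2) (coeff x 1 * (1 + \<gamma>)\<^sup>2) (Z (s - 1) \<omega>) + R \<omega> = 0"
    using assms[unfolded linear_relation_def] AE_space
  proof eventually_elim
    case (elim \<omega>)
    have "(\<Sum>i=1..p. coeff x i * (asym_abs (s - int i) \<omega>)\<^sup>2)
        = coeff x 1 * (asym_abs (s - 1) \<omega>)\<^sup>2 + (\<Sum>i=2..p. coeff x i * (asym_abs (s - int i) \<omega>)\<^sup>2)"
      using p_pos by (subst sum.atLeast_Suc_atMost) (auto simp: numeral_2_eq_2)
    with elim show ?case
      by (simp add: R_def asym_abs_sq piecewise_sq_smult[symmetric] algebra_simps)
  qed
  ultimately have "coeff x 1 * (1 - \<gamma>)\<^sup>2 = 0"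
    using piecewise_sq_coeffs_zero by blast
  then show ?thesis using \<gamma>_bounds by simp
qed

lemma linear_relation_step:
  assumes rel: "linear_relation s c x y" and adm: "admissible x y"
  defines "x' \<equiv> poly_shift 1 x + smult (coeff y 1) arch_poly"
    and "y' \<equiv> poly_shift 1 y - smult (coeff y 1) garch_poly"
  shows "linear_relation (s - 1) (c + coeff y 1 * \<alpha> 0) x' y'"
    and "admissible x' y'"
    and "relation_poly x y = [:0, 1:] * relation_poly x' y'"
proof -
  have x1: "coeff x 1 = 0" using rel by (rule linear_relation_coeff_1)
  have x_high: "coeff x i = 0" if "i > p" for i
    using adm that by (auto simp: admissible_def intro: coeff_eq_0)
  have y_high: "coeff y j = 0" if "j > q" for j
    using adm that by (auto simp: admissible_def intro: coeff_eq_0)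
  have coeff_x': "coeff x' i = coeff x (Suc i) + coeff y 1 * (if 1 \<le> i \<and> i \<le> p then \<alpha> i else 0)" for i
    by (simp add: x'_def arch_poly_def coeff_poly_shift coeff_lag_poly)
  have coeff_y': "coeff y' j = coeff y (Suc j)
      - coeff y 1 * ((if j = 0 then 1 else 0) - (if 1 \<le> j \<and> j \<le> q then \<beta> j else 0))" for j
    by (simp add: y'_def garch_poly_def coeff_poly_shift coeff_lag_poly coeff_1)
  show "admissible x' y'"
    unfolding admissible_def
    using x1 by (auto simp: coeff_x' coeff_y' One_nat_def x_high y_high intro!: degree_le)
  show "relation_poly x y = [:0, 1:] * relation_poly x' y'"
    using adm unfolding relation_poly_def x'_def y'_def admissible_def
    by (intro shift_linear_relation) auto
  show "linear_relation (s - 1) (c + coeff y 1 * \<alpha> 0) x' y'"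
    unfolding linear_relation_def using rel[unfolded linear_relation_def] AE_space
  proof eventually_elim
    case (elim \<omega>)
    define E where "E i = (asym_abs (s - 1 - int i) \<omega>)\<^sup>2" for i
    define S where "S j = (\<sigma> (s - 1 - int j) \<omega>)\<^sup>2" for j
    have shift: "s - (1 + int i) = s - 1 - int i" for i by simp
    have x_sum: "(\<Sum>i=1..p. coeff x i * (asym_abs (s - int i) \<omega>)\<^sup>2) = (\<Sum>i=1..p. coeff x (Suc i) * E i)"
      using sum_shift_index[of "\<lambda>i. coeff x i * (asym_abs (s - int i) \<omega>)\<^sup>2" p] x1 x_high[of "Suc p"]
      by (simp add: shift E_def)
    have y_sum: "(\<Sum>j=1..q. coeff y j * (\<sigma> (s - int j) \<omega>)\<^sup>2)
        = (\<Sum>j=1..q. coeff y (Suc j) * S j) + coeff y 1 * (\<sigma> (s - 1) \<omega>)\<^sup>2"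
      using sum_shift_index[of "\<lambda>j. coeff y j * (\<sigma> (s - int j) \<omega>)\<^sup>2" q] y_high[of "Suc q"]
      by (simp add: shift S_def)
    have "(\<sigma> (s - 1) \<omega>)\<^sup>2 = \<alpha> 0 + (\<Sum>i=1..p. \<alpha> i * E i) + (\<Sum>j=1..q. \<beta> j * S j)"
      using recursion[OF elim(2), of "s - 1"] by (simp add: E_def S_def asym_abs_def)
    moreover have "(\<Sum>i=1..p. coeff x' i * E i)
        = (\<Sum>i=1..p. coeff x (Suc i) * E i) + coeff y 1 * (\<Sum>i=1..p. \<alpha> i * E i)"
      by (simp add: coeff_x' algebra_simps sum.distrib sum_distrib_left)
    moreover have "(\<Sum>j=1..q. coeff y' j * S j)
        = (\<Sum>j=1..q. coeff y (Suc j) * S j) + coeff y 1 * (\<Sum>j=1..q. \<beta> j * S j)"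
      by (simp add: coeff_y' algebra_simps sum.distrib sum_distrib_left)
    ultimately show ?case
      using elim(1) x_sum y_sum by (simp add: E_def S_def algebra_simps)
  qed
qed

lemma linear_relation_iterate:
  assumes "linear_relation s c x y" and "admissible x y"
  shows "\<exists>c' x' y'. linear_relation (s - int n) c' x' y' \<and> admissible x' y'
           \<and> relation_poly x y = [:0, 1:] ^ n * relation_poly x' y'"
proof (induction n)
  case 0
  then show ?case using assms by force
next
  case (Suc n)
  then obtain c' x' y' where IH: "linear_relation (s - int n) c' x' y'" "admissible x' y'"
      "relation_poly x y = [:0, 1:] ^ n * relation_poly x' y'"
    by blast
  from linear_relation_step[OF IH(1,2)] obtain c'' x'' y''
    where "linear_relation (s - int n - 1) c'' x'' y''" "admissible x'' y''"
      and step: "relation_poly x' y' = [:0, 1:] * relation_poly x'' y''"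
    by blast
  moreover have "relation_poly x y = [:0, 1:] ^ Suc n * relation_poly x'' y''"
    by (simp only: IH(3) step power_Suc2 mult.assoc)
  moreover have "s - int (Suc n) = s - int n - 1" by simp
  ultimately show ?case by metis
qed

lemma relation_poly_eq_0:
  assumes "linear_relation s c x y" and "admissible x y"
  shows "relation_poly x y = 0"
proof (rule poly_eqI)
  fix k
  obtain c' x' y' where "relation_poly x y = [:0, 1:] ^ Suc k * relation_poly x' y'"
    using linear_relation_iterate[OF assms, of "Suc k"] by blast
  also have "[:0, 1:] ^ Suc k = (monom 1 (Suc k) :: real poly)"
    by (simp add: monom_altdef)
  finally show "coeff (relation_poly x y) k = coeff 0 k"
    by (simp add: coeff_monom_mult)
qed

lemma linear_relation_trivial:
  assumes no_common_root: "\<not> (\<exists>z::complex. (\<Sum>i=1..p. complex_of_real (\<alpha> i) * z ^ i) = 0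
                              \<and> 1 - (\<Sum>j=1..q. complex_of_real (\<beta> j) * z ^ j) = 0)"
    and last: "(\<alpha> p, \<beta> q) \<noteq> (0, 0)"
    and rel: "linear_relation s c x y" and adm: "admissible x y"
  shows "c = 0 \<and> x = 0 \<and> y = 0"
proof -
  have coeff_garch: "coeff garch_poly j = (if j = 0 then 1 else if j \<le> q then - \<beta> j else 0)" for j
    by (simp add: garch_poly_def coeff_lag_poly coeff_1)
  have "map_poly complex_of_real garch_poly = 1 - map_poly complex_of_real (lag_poly \<beta> q)"
    by (simp add: garch_poly_def poly_eq_iff coeff_map_poly coeff_1)
  then have "coprime arch_poly garch_poly"
    using no_common_root coeff_garch[of 0]
    by (intro coprime_if_no_common_complex_root)
       (auto simp: arch_poly_def poly_map_of_real_lag_poly)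
  moreover have "degree y \<le> degree garch_poly \<or> (arch_poly \<noteq> 0 \<and> degree x \<le> degree arch_poly)"
  proof (cases "\<beta> q = 0")
    case False
    then have "q \<le> degree garch_poly"
      using coeff_garch[of q] by (cases "q = 0") (auto intro: le_degree)
    then show ?thesis using adm by (auto simp: admissible_def)
  next
    case True
    then have "coeff arch_poly p \<noteq> 0" using last p_pos by (simp add: arch_poly_def coeff_lag_poly)
    then have "arch_poly \<noteq> 0" "p \<le> degree arch_poly" by (auto intro: le_degree)
    then show ?thesis using adm by (auto simp: admissible_def)
  qed
  ultimately have "x = 0 \<and> y = 0"
    using relation_poly_eq_0[OF rel adm] adm coeff_garch[of 0]
    by (intro coprime_linear_relation_imp_zero[of arch_poly garch_poly])
       (auto simp: relation_poly_def admissible_def)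
  moreover from this have "AE \<omega> in M. c = 0" using rel by (simp add: linear_relation_def)
  ultimately show ?thesis by simp
qed

lemma leverage_coeff_zero:
  assumes \<alpha>1: "\<alpha> 1 > 0"
    and rel: "AE \<omega> in M. \<xi> 0
        + (\<Sum>i=1..p. \<xi> i * (\<bar>X (1 - int i) \<omega>\<bar> - \<gamma> * X (1 - int i) \<omega>)\<^sup>2)
        + (\<Sum>j=1..q. \<xi> (p + j) * (\<sigma> (1 - int j) \<omega>)\<^sup>2)
        + L * (- 2 * (\<Sum>i=1..p. \<alpha> i * X (1 - int i) \<omega>
                                    * (\<bar>X (1 - int i) \<omega>\<bar> - \<gamma> * X (1 - int i) \<omega>))) = 0"
  shows "L = 0"
proof -
  define a where "a = \<xi> 1 * (1 - \<gamma>)\<^sup>2 + (- 2 * L * \<alpha> 1) * (1 - \<gamma>)"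
  define b where "b = \<xi> 1 * (1 + \<gamma>)\<^sup>2 + (- 2 * L * \<alpha> 1) * (- (1 + \<gamma>))"
  define R where "R \<omega> = \<xi> 0 + (\<Sum>i=2..p. \<xi> i * (asym_abs (1 - int i) \<omega>)\<^sup>2)
      + (\<Sum>j=1..q. \<xi> (p + j) * (\<sigma> (1 - int j) \<omega>)\<^sup>2)
      + L * (- 2 * (\<Sum>i=2..p. \<alpha> i * X (1 - int i) \<omega> * asym_abs (1 - int i) \<omega>))" for \<omega>
  have "R \<in> borel_measurable (past_sigma M Z (0 - 1))"
    unfolding R_def
    by (intro borel_measurable_add borel_measurable_sum borel_measurable_times borel_measurable_power
        borel_measurable_const measurable_asym_abs_past measurable_X_past measurable_sigma_past) auto
  moreover have "AE \<omega> in M. (\<sigma> 0 \<omega>)\<^sup>2 * piecewise_sq a b (Z 0 \<omega>) + R \<omega> = 0"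
    using rel AE_space
  proof eventually_elim
    case (elim \<omega>)
    have "(\<Sum>i=1..p. \<xi> i * (\<bar>X (1 - int i) \<omega>\<bar> - \<gamma> * X (1 - int i) \<omega>)\<^sup>2)
        = \<xi> 1 * (asym_abs 0 \<omega>)\<^sup>2 + (\<Sum>i=2..p. \<xi> i * (asym_abs (1 - int i) \<omega>)\<^sup>2)"
      using p_pos by (subst sum.atLeast_Suc_atMost) (auto simp: numeral_2_eq_2 asym_abs_def)
    moreover have "(\<Sum>i=1..p. \<alpha> i * X (1 - int i) \<omega> * (\<bar>X (1 - int i) \<omega>\<bar> - \<gamma> * X (1 - int i) \<omega>))
        = \<alpha> 1 * (X 0 \<omega> * asym_abs 0 \<omega>) + (\<Sum>i=2..p. \<alpha> i * X (1 - int i) \<omega> * asym_abs (1 - int i) \<omega>)"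
      using p_pos by (subst sum.atLeast_Suc_atMost) (auto simp: numeral_2_eq_2 asym_abs_def)
    moreover have "\<xi> 1 * (asym_abs 0 \<omega>)\<^sup>2 + L * (- 2 * (\<alpha> 1 * (X 0 \<omega> * asym_abs 0 \<omega>)))
        = (\<sigma> 0 \<omega>)\<^sup>2 * piecewise_sq a b (Z 0 \<omega>)"
      unfolding asym_abs_sq[OF elim(2)] X_mult_asym_abs[OF elim(2)] a_def b_def
        piecewise_sq_smult[symmetric] piecewise_sq_add[symmetric]
      by (simp add: algebra_simps)
    ultimately show ?case using elim(1) by (simp add: R_def algebra_simps)
  qed
  ultimately have "a = 0" "b = 0" using piecewise_sq_coeffs_zero by blast+
  moreover have "a = (1 - \<gamma>) * (\<xi> 1 * (1 - \<gamma>) - 2 * L * \<alpha> 1)"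
    and "b = (1 + \<gamma>) * (\<xi> 1 * (1 + \<gamma>) + 2 * L * \<alpha> 1)"
    unfolding a_def b_def by (simp_all add: power2_eq_square algebra_simps)
  ultimately have "\<xi> 1 * (1 - \<gamma>) = 2 * L * \<alpha> 1" "\<xi> 1 * (1 + \<gamma>) = - 2 * L * \<alpha> 1"
    using \<gamma>_bounds by auto
  then have "\<xi> 1 * (1 - \<gamma>) + \<xi> 1 * (1 + \<gamma>) = 0" "\<xi> 1 * (1 - \<gamma>) = 2 * L * \<alpha> 1" by simp_all
  then have "L * \<alpha> 1 = 0" by (simp add: algebra_simps)
  then show ?thesis using \<alpha>1 by simp
qed

theorem gradient_components_independent:
  assumes \<alpha>1: "\<alpha> 1 > 0"
    and no_common_root: "\<not> (\<exists>z::complex. (\<Sum>i=1..p. complex_of_real (\<alpha> i) * z ^ i) = 0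
                              \<and> 1 - (\<Sum>j=1..q. complex_of_real (\<beta> j) * z ^ j) = 0)"
    and last: "(\<alpha> p, \<beta> q) \<noteq> (0, 0)"
    and rel: "AE \<omega> in M. \<xi> 0
        + (\<Sum>i=1..p. \<xi> i * (\<bar>X (1 - int i) \<omega>\<bar> - \<gamma> * X (1 - int i) \<omega>)\<^sup>2)
        + (\<Sum>j=1..q. \<xi> (p + j) * (\<sigma> (1 - int j) \<omega>)\<^sup>2)
        + \<xi> (p + q + 1) * (- 2 * (\<Sum>i=1..p. \<alpha> i * X (1 - int i) \<omega>
                                    * (\<bar>X (1 - int i) \<omega>\<bar> - \<gamma> * X (1 - int i) \<omega>))) = 0"
  shows "\<forall>i < p + q + 2. \<xi> i = 0"
proof -
  have L: "\<xi> (p + q + 1) = 0" using leverage_coeff_zero[OF \<alpha>1 rel] .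
  let ?x = "lag_poly \<xi> p" and ?y = "lag_poly (\<lambda>j. \<xi> (p + j)) q"
  have "linear_relation 1 (\<xi> 0) ?x ?y"
    unfolding linear_relation_def using rel[unfolded L]
    by eventually_elim (simp add: asym_abs_def coeff_lag_poly)
  moreover have "admissible ?x ?y"
    by (simp add: admissible_def coeff_lag_poly degree_lag_poly_le)
  ultimately have "\<xi> 0 = 0" "?x = 0" "?y = 0"
    using linear_relation_trivial[OF no_common_root last] by auto
  then have x: "coeff ?x i = 0" and y: "coeff ?y (i - p) = 0" for i by simp_all
  show ?thesis
  proof (intro allI impI)
    fix i assume "i < p + q + 2"
    then consider "i = 0" | "1 \<le> i" "i \<le> p" | "p < i" "i \<le> p + q" | "i = p + q + 1"
      by linarith
    then show "\<xi> i = 0"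
      using x[of i] y[of i] L \<open>\<xi> 0 = 0\<close> by cases (auto simp: coeff_lag_poly split: if_splits)
  qed
qed

end

lemma interior_of_coord_space_perturb:
  fixes \<theta> :: "nat \<Rightarrow> real"
  assumes int: "\<theta> \<in> top_of_set (coord_space d) interior_of K" and "k < d"
  shows "\<exists>\<epsilon>>0. \<forall>t. \<bar>t\<bar> < \<epsilon> \<longrightarrow> \<theta>(k := \<theta> k + t) \<in> K"
proof -
  obtain U where U: "openin (top_of_set (coord_space d)) U" "\<theta> \<in> U" "U \<subseteq> K"
    using int unfolding interior_of_def by blast
  then obtain V where V: "open V" "U = coord_space d \<inter> V" by (auto simp: openin_open)
  define f where "f t = \<theta>(k := \<theta> k + t)" for t :: real
  have "continuous_on UNIV f"
    unfolding f_def
  proof (rule continuous_on_coordinatewise_then_product)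
    fix i show "continuous_on UNIV (\<lambda>t. (\<theta>(k := \<theta> k + t)) i)"
      by (cases "i = k") (simp_all add: continuous_on_add)
  qed
  then have "open (f -` V)" by (rule open_vimage[OF V(1)])
  moreover have "0 \<in> f -` V" using U V unfolding f_def by auto
  ultimately obtain \<epsilon> where "\<epsilon> > 0" and ball: "ball 0 \<epsilon> \<subseteq> f -` V"
    using open_contains_ball by blast
  have "f t \<in> K" if "\<bar>t\<bar> < \<epsilon>" for t
  proof -
    have "f t \<in> V" using ball that by (auto simp: dist_real_def)
    moreover have "f t \<in> coord_space d"
      using U V \<open>k < d\<close> unfolding f_def coord_space_def by auto
    ultimately show ?thesis using U V by auto
  qed
  then show ?thesis using \<open>\<epsilon> > 0\<close> unfolding f_def by blast
qed

lemma interior_of_coord_space_gt: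
  fixes \<theta> :: "nat \<Rightarrow> real"
  assumes "\<theta> \<in> top_of_set (coord_space d) interior_of K" "k < d" "\<And>\<theta>'. \<theta>' \<in> K \<Longrightarrow> a \<le> \<theta>' k"
  shows "a < \<theta> k"
proof -
  obtain \<epsilon> where "\<epsilon> > 0" and perturb: "\<And>t. \<bar>t\<bar> < \<epsilon> \<Longrightarrow> \<theta>(k := \<theta> k + t) \<in> K"
    using interior_of_coord_space_perturb[OF assms(1,2)] by blast
  then have "\<theta>(k := \<theta> k + - \<epsilon> / 2) \<in> K" by (intro perturb) simp
  then show ?thesis using assms(3) \<open>\<epsilon> > 0\<close> by fastforce
qed

lemma interior_of_coord_space_lt:
  fixes \<theta> :: "nat \<Rightarrow> real"
  assumes "\<theta> \<in> top_of_set (coord_space d) interior_of K" "k < d" "\<And>\<theta>'. \<theta>' \<in> K \<Longrightarrow> \<theta>' k \<le> b"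
  shows "\<theta> k < b"
proof -
  obtain \<epsilon> where "\<epsilon> > 0" and perturb: "\<And>t. \<bar>t\<bar> < \<epsilon> \<Longrightarrow> \<theta>(k := \<theta> k + t) \<in> K"
    using interior_of_coord_space_perturb[OF assms(1,2)] by blast
  then have "\<theta>(k := \<theta> k + \<epsilon> / 2) \<in> K" by (intro perturb) simp
  then show ?thesis using assms(3) \<open>\<epsilon> > 0\<close> by fastforce
qed

lemma AGARCH_param_set_interior:
  assumes int: "param_vec p q \<alpha> \<beta> \<gamma> \<in> top_of_set (coord_space (p + q + 2)) interior_of K"
    and K: "K \<subseteq> AGARCH_param_set p q"
  shows "\<alpha> 0 > 0" and "\<And>i. i \<in> {1..p} \<Longrightarrow> \<alpha> i > 0" and "\<And>j. j \<in> {1..q} \<Longrightarrow> \<beta> j \<ge> 0"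
    and "-1 < \<gamma>" and "\<gamma> < 1"
proof -
  let ?\<theta> = "param_vec p q \<alpha> \<beta> \<gamma>"
  have "?\<theta> \<in> AGARCH_param_set p q" using interior_of_subset[of _ K] int K by blast
  then show "\<alpha> 0 > 0" "\<And>j. j \<in> {1..q} \<Longrightarrow> \<beta> j \<ge> 0"
    by (auto simp: AGARCH_param_set_def param_vec_def)
  have \<alpha>_bound: "\<theta>' i \<ge> 0" if "\<theta>' \<in> K" "i \<in> {1..p}" for \<theta>' i
    using that K by (auto simp: AGARCH_param_set_def)
  have \<gamma>_bounds: "-1 \<le> \<theta>' (p + q + 1)" "\<theta>' (p + q + 1) \<le> 1" if "\<theta>' \<in> K" for \<theta>'
    using that K by (auto simp: AGARCH_param_set_def)
  show "\<alpha> i > 0" if "i \<in> {1..p}" for i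
    using interior_of_coord_space_gt[OF int, of i 0] \<alpha>_bound that by (auto simp: param_vec_def)
  show "-1 < \<gamma>" "\<gamma> < 1"
    using interior_of_coord_space_gt[OF int, of "p + q + 1" "-1"]
      interior_of_coord_space_lt[OF int, of "p + q + 1" 1] \<gamma>_bounds
    by (auto simp: param_vec_def)
qed

theorem lemma8p2:
  fixes M :: "'a measure"
    and Z X \<sigma> :: "int \<Rightarrow> 'a \<Rightarrow> real"
    and p q :: nat
    and \<alpha> \<beta> :: "nat \<Rightarrow> real" and \<gamma> :: real
    and K :: "(nat \<Rightarrow> real) set"
  assumes prob: "prob_space M"
    (* innovations: i.i.d., mean 0, variance 1 *)
    and Z_meas: "\<And>t. Z t \<in> borel_measurable M"
    and Z_indep: "prob_space.indep_vars M (\<lambda>_. borel) Z UNIV"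
    and Z_ident: "\<And>t. distr M borel (Z t) = distr M borel (Z 0)"
    and Z_int: "integrable M (Z 0)" and Z_mean: "(\<integral>\<omega>. Z 0 \<omega> \<partial>M) = 0"
    and Z_int2: "integrable M (\<lambda>\<omega>. (Z 0 \<omega>)\<^sup>2)" and Z_var: "(\<integral>\<omega>. (Z 0 \<omega>)\<^sup>2 \<partial>M) = 1"
    (* AGARCH(p,q) equations *)
    and pq: "p \<ge> 1" "q \<ge> 1"
    and \<sigma>_nonneg: "\<And>t \<omega>. \<omega> \<in> space M \<Longrightarrow> \<sigma> t \<omega> \<ge> 0"
    and \<sigma>_adapted: "\<And>t. \<sigma> t \<in> borel_measurable (past_sigma M Z (t - 1))"
    and X_def: "\<And>t \<omega>. \<omega> \<in> space M \<Longrightarrow> X t \<omega> = \<sigma> t \<omega> * Z t \<omega>"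
    and recursion: "\<And>t \<omega>. \<omega> \<in> space M \<Longrightarrow>
        (\<sigma> t \<omega>)\<^sup>2 = \<alpha> 0 + (\<Sum>i=1..p. \<alpha> i * (\<bar>X (t - int i) \<omega>\<bar> - \<gamma> * X (t - int i) \<omega>)\<^sup>2)
                     + (\<Sum>j=1..q. \<beta> j * (\<sigma> (t - int j) \<omega>)\<^sup>2)"
    and stationary: "strictly_stationary M (\<lambda>t \<omega>. (X t \<omega>, \<sigma> t \<omega>))"
    (* parameter space *)
    and K_sub: "K \<subseteq> AGARCH_param_set p q"
    and K_compact: "compact K"
    and K_reg: "top_of_set (coord_space (p + q + 2)) closure_of
                  (top_of_set (coord_space (p + q + 2)) interior_of K) = K"
    and \<theta>0_int: "param_vec p q \<alpha> \<beta> \<gamma> \<in> top_of_set (coord_space (p + q + 2)) interior_of K"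
    (* further conditions *)
    and \<alpha>_pos: "\<exists>i\<in>{1..p}. \<alpha> i > 0"
    and \<alpha>\<beta>_last: "(\<alpha> p, \<beta> q) \<noteq> (0, 0)"
    and coprime: "\<not> (\<exists>z::complex. (\<Sum>i=1..p. complex_of_real (\<alpha> i) * z ^ i) = 0
                              \<and> 1 - (\<Sum>j=1..q. complex_of_real (\<beta> j) * z ^ j) = 0)"
    and not_two_points: "\<not> (\<exists>a b. measure M {\<omega> \<in> space M. Z 0 \<omega> = a \<or> Z 0 \<omega> = b} = 1)"
    and Z_int4: "integrable M (\<lambda>\<omega>. (Z 0 \<omega>) ^ 4)"
    and small_ball: "\<exists>\<mu>>0. (\<lambda>z. measure M {\<omega> \<in> space M. \<bar>Z 0 \<omega>\<bar> \<le> z}) \<in> o[at_right 0](\<lambda>z. z powr \<mu>)"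
  shows "\<forall>\<xi> :: nat \<Rightarrow> real.
    (AE \<omega> in M. \<xi> 0
        + (\<Sum>i=1..p. \<xi> i * (\<bar>X (1 - int i) \<omega>\<bar> - \<gamma> * X (1 - int i) \<omega>)\<^sup>2)
        + (\<Sum>j=1..q. \<xi> (p + j) * (\<sigma> (1 - int j) \<omega>)\<^sup>2)
        + \<xi> (p + q + 1) * (- 2 * (\<Sum>i=1..p. \<alpha> i * X (1 - int i) \<omega>
                                    * (\<bar>X (1 - int i) \<omega>\<bar> - \<gamma> * X (1 - int i) \<omega>))) = 0)
    \<longrightarrow> (\<forall>i < p + q + 2. \<xi> i = 0)"
proof -
  note param = AGARCH_param_set_interior[OF \<theta>0_int K_sub]
  interpret agarch M Z X \<sigma> p q \<alpha> \<beta> \<gamma>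
    using prob Z_meas Z_indep Z_ident Z_int Z_mean Z_int2 not_two_points pq(1)
      \<sigma>_nonneg \<sigma>_adapted X_def recursion param
    by (auto simp: agarch_def agarch_axioms_def iid_innovations_def iid_innovations_axioms_def
        intro: less_imp_le)
  have "\<alpha> 1 > 0" using param(2) pq(1) by simp
  then show ?thesis using gradient_components_independent[OF _ coprime \<alpha>\<beta>_last] by blast
qed

end
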